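(* Let $P$ be an optimal EBA decision protocol with respect to $\gamma_{\mathit{fip},n,t}$ and $\mathcal I=\mathcal I_{\gamma_{\mathit{fip},n,t},P}$. If for some agent $i$ and point $(r,m)$ we have $\mathcal I,(r,m)\models \mathit{decided}_i=\bot\wedge K_i\big(C_{\mathcal N}(\mathit{t\text{-}faulty}\wedge\mathit{no\text{-}decided}_{\mathcal N}(1)\wedge\exists 0)\big)$, then every agent $j\in\mathcal N(r)$ that has not decided by time $m$ decides in round $m+1$ of $r$. The same conclusion holds if instead $\mathcal I,(r,m)\models \mathit{decided}_i=\bot\wedge K_i\big(C_{\mathcal N}(\mathit{t\text{-}faulty}\wedge\mathit{no\text{-}decided}_{\mathcal N}(0)\wedge\exists 1)\big)$.
   Context: Agents and runs. There are $n$ agents $\mathit{Agt}=\{1,\ldots,n\}$; time is $m\in\mathbb N$, and round $m+1$ is the step from time $m$ to time $m+1$. A failure pattern is a pair $(\mathcal N,F)$ with $\mathcal N\subseteq\mathit{Agt}$ (the nonfaulty agents) and $F:\mathbb N\times\mathit{Agt}\times\mathit{Agt}\to\{0,1\}$, where $F(m,i,j)=0$ means the message from $i$ to $j$ in round $m+1$ is lost. The sending-omissions failure model $SO(t)$ ($t<n$) is the set of failure patterns with $|\mathit{Agt}\setminus\mathcal N|\le t$ such that $F(m,i,j)=0$ implies $i\notin\mathcal N$. An action protocol $P$ gives each agent $i$ a map $P_i$ from its local states to actions $\{\mathtt{decide}_i(0),\mathtt{decide}_i(1),\mathtt{noop}\}$; a run $r$ is determined by the initial states and failure pattern: at each time $k$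 each agent performs $P_i(r_i(k))$, sends its messages, lost messages are replaced by $\bot$, and local states are updated; $\mathcal N(r)$ is the nonfaulty set of $r$. Agent $i$ decides $v$ in round $k$ of $r$ if $P_i(r_i(k-1))=\mathtt{decide}_i(v)$. $\mathcal I,(r,m)\models K_i\varphi$ iff $\varphi$ holds at all points $(r',m')$ of $\mathcal I$ with $r'_i(m')=r_i(m)$; $\bigcirc\varphi$ holds at $(r,m)$ iff $\varphi$ holds at $(r,m+1)$; $\ominus\varphi$ holds at $(r,m)$ iff $m>0$ and $\varphi$ holds at $(r,m-1)$. Full-information context. $\gamma_{\mathit{fip},n,t}$ has $n$ agents and failure model $SO(t)$. Each agent's local state consists of its time $\mathit{time}_i$, its initial preference $\mathit{init}_i\in\{0,1\}$ (arbitrary), and the complete record of all messages it has received (with senders and rounds); it does not contain decision variables. In every round every agent sends its entire current local state to every agent, regardless of its action. Given an action protocol $P$, $\mathcal I_{\gamma_{\mathit{fip},n,t},P}$ is the interpreted system of all its runs, where $\mathit{decided}_i=v$ holds at $(r,m)$ iff $i$ decided $v$ in some round $\le m$ of $r$ ($\mathit{decided}_i=\bot$ if $i$ has not decided), $\mathit{init}_i=v$ is read from the local state, and $i\in\mathcal N$ holds iff $i\in\mathcal N(r)$. $\exists v$ abbreviates $\bigvee_j\mathit{init}_j=v$. $P$ is an EBA decision protocol for $\gamma_{\mathit{fip},n,t}$ if in every run: (Unique Decision) no agent decides $v$ and later $1-v$; (Agreement) no two nonfaulty agents decide different values; (Validity) if a nonfaulty agent decides $v$ then $\mathit{init}_j=v$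 for some $j$; (Termination) every nonfaulty agent eventually decides. Runs of $P$ and $P'$ correspond if they have the same initial global state. $P$ dominates $P'$ ($P'\le P$) if for all corresponding runs $r$ of $P$, $r'$ of $P'$, every $i\in\mathcal N(r)$ and time $m$: if $P_i(r_i(m))=\mathtt{decide}_i(v)$ then $P'_i(r'_i(m'))$ is not a decide action for any $m'<m$; $P$ strictly dominates $P'$ if $P'\le P$ and not $P\le P'$; an EBA decision protocol is optimal if no EBA decision protocol strictly dominates it. Common knowledge. $E_{\mathcal N}\varphi$ holds at $(r,m)$ iff $K_j\varphi$ holds at $(r,m)$ for every $j\in\mathcal N(r)$; $C_{\mathcal N}\varphi$ holds iff $E_{\mathcal N}^k\varphi$ holds for every $k\ge1$. $C_{\mathcal N}(\mathit{t\text{-}faulty}\wedge\varphi)$ abbreviates $\bigvee_{A\subseteq\mathit{Agt},\,|A|=t}C_{\mathcal N}\big(\bigwedge_{i\in A}\neg(i\in\mathcal N)\wedge\varphi\big)$, and $C_{\mathcal N}(\mathit{t\text{-}faulty})$ is the case $\varphi=\mathit{true}$. $\mathit{no\text{-}decided}_{\mathcal N}(x)$ abbreviates $\bigwedge_{j\in\mathcal N}\neg(\mathit{decided}_j=x)$. *)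

theory Defs
  imports Main
begin

(* Values 0/1 are represented by False/True. *)

(* Full-information local state: time, initial preference, and the record of
   messages received: entry k of the list is round k+1, mapping each sender j
   to Some (j's local state at time k) or None (message lost, i.e. \<bottom>). *)
datatype lstate = LS (ls_time: nat) (ls_init: bool) (ls_recv: "(nat \<Rightarrow> lstate option) list")

datatype action = Decide bool | Noop

(* A run is determined by initial values and a failure pattern (N, F);
   F m i j = False means the message from i to j in round m+1 is lost. *)
record run =
  rinit :: "nat \<Rightarrow> bool"
  rN :: "nat set"
  rF :: "nat \<Rightarrow> nat \<Rightarrow> nat \<Rightarrow> bool"

definition agts :: "nat \<Rightarrow> nat set" where
  "agts n = {1..n}"

definition SO :: "nat \<Rightarrow> nat \<Rightarrow> nat set \<Rightarrow> (nat \<Rightarrow> nat \<Rightarrow> nat \<Rightarrow> bool) \<Rightarrow> bool" where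
  "SO n t Nf F \<longleftrightarrow> Nf \<subseteq> agts n \<and> card (agts n - Nf) \<le> t \<and> (\<forall>m i j. \<not> F m i j \<longrightarrow> i \<notin> Nf)"

primrec gst :: "nat \<Rightarrow> (nat \<Rightarrow> bool) \<Rightarrow> (nat \<Rightarrow> nat \<Rightarrow> nat \<Rightarrow> bool) \<Rightarrow> nat \<Rightarrow> nat \<Rightarrow> lstate" where
  "gst n init F 0 = (\<lambda>i. LS 0 (init i) [])"
| "gst n init F (Suc m) = (\<lambda>i. LS (Suc m) (init i)
      (ls_recv (gst n init F m i) @
        [(\<lambda>j. if j \<in> agts n \<and> F m j i then Some (gst n init F m j) else None)]))"

definition lst :: "nat \<Rightarrow> run \<Rightarrow> nat \<Rightarrow> nat \<Rightarrow> lstate" where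
  "lst n r i m = gst n (rinit r) (rF r) m i"

(* all runs of gamma_fip,n,t (local states do not depend on the protocol) *)
definition runs :: "nat \<Rightarrow> nat \<Rightarrow> run set" where
  "runs n t = {r. SO n t (rN r) (rF r)}"

type_synonym protocol = "nat \<Rightarrow> lstate \<Rightarrow> action"
type_synonym point = "run \<times> nat"
type_synonym fml = "point \<Rightarrow> bool"

definition is_decide :: "action \<Rightarrow> bool" where
  "is_decide a \<longleftrightarrow> (\<exists>v. a = Decide v)"

definition decides_in_round :: "protocol \<Rightarrow> nat \<Rightarrow> run \<Rightarrow> nat \<Rightarrow> nat \<Rightarrow> bool \<Rightarrow> bool" where
  "decides_in_round P n r i k v \<longleftrightarrow> 1 \<le> k \<and> P i (lst n r i (k - 1)) = Decide v"

definition decided_val :: "protocol \<Rightarrow> nat \<Rightarrow> nat \<Rightarrow> bool \<Rightarrow> fml" where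
  "decided_val P n i v = (\<lambda>(r, m). \<exists>k. k \<le> m \<and> decides_in_round P n r i k v)"

definition undecided :: "protocol \<Rightarrow> nat \<Rightarrow> nat \<Rightarrow> fml" where
  "undecided P n i = (\<lambda>(r, m). \<forall>k v. k \<le> m \<longrightarrow> \<not> decides_in_round P n r i k v)"

definition K :: "run set \<Rightarrow> nat \<Rightarrow> nat \<Rightarrow> fml \<Rightarrow> fml" where
  "K R n i \<phi> = (\<lambda>(r, m). \<forall>r'\<in>R. \<forall>m'. lst n r' i m' = lst n r i m \<longrightarrow> \<phi> (r', m'))"

definition E_N :: "run set \<Rightarrow> nat \<Rightarrow> fml \<Rightarrow> fml" where
  "E_N R n \<phi> = (\<lambda>(r, m). \<forall>j\<in>rN r. K R n j \<phi> (r, m))"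

definition C_N :: "run set \<Rightarrow> nat \<Rightarrow> fml \<Rightarrow> fml" where
  "C_N R n \<phi> = (\<lambda>pt. \<forall>k\<ge>1. ((E_N R n) ^^ k) \<phi> pt)"

definition C_tfaulty :: "run set \<Rightarrow> nat \<Rightarrow> nat \<Rightarrow> fml \<Rightarrow> fml" where
  "C_tfaulty R n t \<phi> = (\<lambda>pt. \<exists>A. A \<subseteq> agts n \<and> card A = t \<and>
       C_N R n (\<lambda>(r, m). (\<forall>i\<in>A. i \<notin> rN r) \<and> \<phi> (r, m)) pt)"

definition no_decided :: "protocol \<Rightarrow> nat \<Rightarrow> bool \<Rightarrow> fml" where
  "no_decided P n x = (\<lambda>(r, m). \<forall>j\<in>rN r. \<not> decided_val P n j x (r, m))"

definition exists_init :: "nat \<Rightarrow> bool \<Rightarrow> fml" where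
  "exists_init n v = (\<lambda>(r, m). \<exists>j\<in>agts n. rinit r j = v)"

definition EBA :: "nat \<Rightarrow> nat \<Rightarrow> protocol \<Rightarrow> bool" where
  "EBA n t P \<longleftrightarrow> (\<forall>r\<in>runs n t.
     (\<forall>i\<in>agts n. \<forall>k k' v. k < k' \<and> decides_in_round P n r i k v \<longrightarrow> \<not> decides_in_round P n r i k' (\<not> v))
   \<and> (\<forall>i\<in>rN r. \<forall>j\<in>rN r. \<forall>k k' v w. decides_in_round P n r i k v \<and> decides_in_round P n r j k' w \<longrightarrow> v = w)
   \<and> (\<forall>i\<in>rN r. \<forall>k v. decides_in_round P n r i k v \<longrightarrow> (\<exists>j\<in>agts n. rinit r j = v))
   \<and> (\<forall>i\<in>rN r. \<exists>k v. decides_in_round P n r i k v))"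

(* P dominates P' (P' \<le> P); corresponding runs are the runs with the same
   initial values and failure pattern *)
definition dominates :: "nat \<Rightarrow> nat \<Rightarrow> protocol \<Rightarrow> protocol \<Rightarrow> bool" where
  "dominates n t P P' \<longleftrightarrow> (\<forall>r\<in>runs n t. \<forall>i\<in>rN r. \<forall>m v.
      P i (lst n r i m) = Decide v \<longrightarrow> (\<forall>m'<m. \<not> is_decide (P' i (lst n r i m'))))"

definition optimal :: "nat \<Rightarrow> nat \<Rightarrow> protocol \<Rightarrow> bool" where
  "optimal n t P \<longleftrightarrow> EBA n t P \<and>
     \<not> (\<exists>P'. EBA n t P' \<and> dominates n t P' P \<and> \<not> dominates n t P P')"

end

theory Submission imports Defs begin

text \<open>Suppose the common knowledge for v is known to some agent at (r, m), while a nonfaulty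
  agent j is undecided at time m and P does not let it decide there. Modify P: an agent decides v
  as soon as it is undecided and knows the common knowledge, stays silent after this moment or
  after its first P-decision, and otherwise follows P. Early v-decisions cannot break agreement:
  once the common knowledge holds, a nonfaulty agent that has not decided \<not>v by then is still
  undecided and knows it, so it decides v first. The modified protocol is therefore an EBA
  decision protocol that never decides later than P, and it makes j decide no later than m in r,
  strictly before P does. This contradicts the optimality of P.\<close>

section \<open>Local states in the full-information context\<close>

lemma ls_time_gst [simp]: "ls_time (gst n init F m i) = m"
  by (cases m) auto

lemma ls_init_gst [simp]: "ls_init (gst n init F m i) = init i"
  by (cases m) auto

lemma length_ls_recv_gst [simp]: "length (ls_recv (gst n init F m i)) = m"
  by (induction m) auto

lemma gst_eq_take:
  "k \<le> m \<Longrightarrow> gst n init F k i = LS k (init i) (take k (ls_recv (gst n init F m i)))"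
  by (induction m) (auto simp: le_Suc_eq)

lemma lst_eq_time: "lst n r j m = lst n r' j m' \<Longrightarrow> m = m'"
  unfolding lst_def by (metis ls_time_gst)

lemma lst_eq_prefix:
  assumes "lst n r j m = lst n r' j m" and "k \<le> m"
  shows "lst n r j k = lst n r' j k"
proof -
  have "rinit r j = rinit r' j" and "ls_recv (lst n r j m) = ls_recv (lst n r' j m)"
    using arg_cong[OF assms(1), of ls_init] assms(1) by (simp_all add: lst_def)
  then show ?thesis
    using assms(2) by (simp add: lst_def gst_eq_take[of k m])
qed

lemma undecided_eq_prefix:
  assumes "lst n r j m = lst n r' j m" and "k \<le> m"
  shows "undecided P n j (r, k) = undecided P n j (r', k)"
proof -
  have "lst n r j (l - 1) = lst n r' j (l - 1)" if "l \<le> k" for l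
    using lst_eq_prefix[OF assms(1)] that assms(2) by simp
  then show ?thesis
    unfolding undecided_def decides_in_round_def by auto
qed

lemma nonfaulty_nonempty:
  assumes "r \<in> runs n t" and "t < n"
  shows "rN r \<noteq> {}"
  using assms by (auto simp: runs_def SO_def agts_def)

section \<open>Protocols defined from histories\<close>

text \<open>On reachable local states, protocol_of n t A agrees with A as soon as A depends on a run
  only through the agent's local state (protocol_of_lst); elsewhere its value is arbitrary.\<close>
definition protocol_of :: "nat \<Rightarrow> nat \<Rightarrow> (nat \<Rightarrow> run \<Rightarrow> nat \<Rightarrow> action) \<Rightarrow> protocol" where
  "protocol_of n t A j s = (let (r, m) = SOME (r, m). r \<in> runs n t \<and> lst n r j m = s in A j r m)"

lemma protocol_of_lst:
  assumes local: "\<And>r r' m. r \<in> runs n t \<Longrightarrow> r' \<in> runs n t \<Longrightarrow>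
                     lst n r j m = lst n r' j m \<Longrightarrow> A j r m = A j r' m"
    and r: "r \<in> runs n t"
  shows "protocol_of n t A j (lst n r j m) = A j r m"
proof -
  let ?p = "SOME (r', m'). r' \<in> runs n t \<and> lst n r' j m' = lst n r j m"
  have "fst ?p \<in> runs n t \<and> lst n (fst ?p) j (snd ?p) = lst n r j m"
    using someI[of "\<lambda>(r', m'). r' \<in> runs n t \<and> lst n r' j m' = lst n r j m" "(r, m)"] r
    by (simp add: case_prod_beta)
  moreover from this have "snd ?p = m"
    by (blast dest: lst_eq_time)
  ultimately show ?thesis
    using local[of "fst ?p" r m] r by (simp add: protocol_of_def case_prod_beta)
qed

section \<open>Knowledge\<close>

lemma K_veridical: "r \<in> R \<Longrightarrow> K R n j \<phi> (r, k) \<Longrightarrow> \<phi> (r, k)"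
  unfolding K_def by auto

lemma K_eq_lst: "lst n r j k = lst n r' j k \<Longrightarrow> K R n j \<phi> (r, k) = K R n j \<phi> (r', k)"
  unfolding K_def by simp

lemma C_N_imp_E_N: "C_N R n \<phi> pt \<Longrightarrow> E_N R n \<phi> pt"
proof -
  assume "C_N R n \<phi> pt"
  then have "((E_N R n) ^^ 1) \<phi> pt"
    unfolding C_N_def by blast
  then show ?thesis
    by simp
qed

lemma C_N_known:
  assumes "C_N R n \<phi> (r, k)" and "j \<in> rN r"
  shows "K R n j (C_N R n \<phi>) (r, k)"
  unfolding K_def C_N_def prod.case
proof (intro ballI allI impI)
  fix r' m' and l :: nat
  assume r': "r' \<in> R" and eq: "lst n r' j m' = lst n r j k" and "1 \<le> l"
  have "((E_N R n) ^^ Suc l) \<phi> (r, k)"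
    using assms(1) unfolding C_N_def by (simp del: funpow.simps)
  then have "E_N R n (((E_N R n) ^^ l) \<phi>) (r, k)"
    by simp
  then have "K R n j (((E_N R n) ^^ l) \<phi>) (r, k)"
    using assms(2) unfolding E_N_def by simp
  then show "((E_N R n) ^^ l) \<phi> (r', m')"
    using r' eq unfolding K_def by simp
qed

lemma K_mono: "K R n j \<phi> pt \<Longrightarrow> (\<And>pt. \<phi> pt \<Longrightarrow> \<psi> pt) \<Longrightarrow> K R n j \<psi> pt"
  unfolding K_def by (auto split: prod.splits)

lemma C_tfaulty_known:
  assumes "C_tfaulty R n t \<phi> (r, k)" and "j \<in> rN r"
  shows "K R n j (C_tfaulty R n t \<phi>) (r, k)"
proof -
  obtain A where A: "A \<subseteq> agts n" "card A = t"
    and C: "C_N R n (\<lambda>(r, m). (\<forall>i\<in>A. i \<notin> rN r) \<and> \<phi> (r, m)) (r, k)"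
    using assms(1) unfolding C_tfaulty_def by blast
  have "C_tfaulty R n t \<phi> pt"
    if "C_N R n (\<lambda>(r, m). (\<forall>i\<in>A. i \<notin> rN r) \<and> \<phi> (r, m)) pt" for pt
    unfolding C_tfaulty_def using A that by (intro exI[of _ A]) simp
  then show ?thesis
    using K_mono[OF C_N_known[OF C assms(2)]] by blast
qed

lemma C_tfaulty_veridical:
  assumes "C_tfaulty R n t \<phi> (r, k)" and "r \<in> R" and "rN r \<noteq> {}"
  shows "\<phi> (r, k)"
proof -
  obtain A where "C_N R n (\<lambda>(r, m). (\<forall>i\<in>A. i \<notin> rN r) \<and> \<phi> (r, m)) (r, k)"
    using assms(1) unfolding C_tfaulty_def by blast
  then have E: "E_N R n (\<lambda>(r, m). (\<forall>i\<in>A. i \<notin> rN r) \<and> \<phi> (r, m)) (r, k)"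
    by (rule C_N_imp_E_N)
  obtain j where "j \<in> rN r"
    using assms(3) by blast
  with E have "K R n j (\<lambda>(r, m). (\<forall>i\<in>A. i \<notin> rN r) \<and> \<phi> (r, m)) (r, k)"
    unfolding E_N_def by simp
  from K_veridical[OF assms(2) this] show ?thesis
    by simp
qed

section \<open>Deciding early on common knowledge\<close>

definition safe_to_decide :: "protocol \<Rightarrow> nat \<Rightarrow> nat \<Rightarrow> bool \<Rightarrow> fml" where
  "safe_to_decide P n t v = C_tfaulty (runs n t) n t (\<lambda>pt. no_decided P n (\<not> v) pt \<and> exists_init n v pt)"

definition ready :: "protocol \<Rightarrow> nat \<Rightarrow> nat \<Rightarrow> bool \<Rightarrow> nat \<Rightarrow> run \<Rightarrow> nat \<Rightarrow> bool" where
  "ready P n t v j r k \<longleftrightarrow> undecided P n j (r, k) \<and> K (runs n t) n j (safe_to_decide P n t v) (r, k)"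

definition early_action :: "protocol \<Rightarrow> nat \<Rightarrow> nat \<Rightarrow> bool \<Rightarrow> nat \<Rightarrow> run \<Rightarrow> nat \<Rightarrow> action" where
  "early_action P n t v j r m =
     (if \<exists>k<m. ready P n t v j r k \<or> is_decide (P j (lst n r j k)) then Noop
      else if ready P n t v j r m then Decide v
      else P j (lst n r j m))"

definition early_protocol :: "protocol \<Rightarrow> nat \<Rightarrow> nat \<Rightarrow> bool \<Rightarrow> protocol" where
  "early_protocol P n t v = protocol_of n t (early_action P n t v)"

lemma safe_to_decide_known:
  "safe_to_decide P n t v (r, k) \<Longrightarrow> j \<in> rN r \<Longrightarrow> K (runs n t) n j (safe_to_decide P n t v) (r, k)"
  unfolding safe_to_decide_def by (rule C_tfaulty_known)

lemma safe_to_decide_veridical: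
  assumes "t < n" and "r \<in> runs n t" and "safe_to_decide P n t v (r, k)"
  shows "no_decided P n (\<not> v) (r, k)" and "exists_init n v (r, k)"
  using C_tfaulty_veridical[OF assms(3)[unfolded safe_to_decide_def] assms(2)
      nonfaulty_nonempty[OF assms(2,1)]] by simp_all

lemma ready_eq_prefix:
  assumes "lst n r j m = lst n r' j m" and "k \<le> m"
  shows "ready P n t v j r k = ready P n t v j r' k"
  using undecided_eq_prefix[OF assms] K_eq_lst[OF lst_eq_prefix[OF assms]]
  by (simp add: ready_def)

lemma early_protocol_lst:
  assumes "r \<in> runs n t"
  shows "early_protocol P n t v j (lst n r j m) = early_action P n t v j r m"
  unfolding early_protocol_def
proof (rule protocol_of_lst[OF _ assms])
  fix r r' m
  assume eq: "lst n r j m = lst n r' j m"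
  have "ready P n t v j r k = ready P n t v j r' k"
    and "lst n r j k = lst n r' j k" if "k \<le> m" for k
    using ready_eq_prefix[OF eq that] lst_eq_prefix[OF eq that] by simp_all
  then show "early_action P n t v j r m = early_action P n t v j r' m"
    unfolding early_action_def by (simp cong: conj_cong)
qed

lemma early_action_decide_cases:
  assumes "early_action P n t v j r m = Decide w"
  shows "\<forall>k<m. \<not> ready P n t v j r k \<and> \<not> is_decide (P j (lst n r j k))"
    and "ready P n t v j r m \<and> w = v \<or> \<not> ready P n t v j r m \<and> P j (lst n r j m) = Decide w"
  using assms unfolding early_action_def by (auto split: if_splits)

lemma early_action_decides_once:
  assumes "is_decide (early_action P n t v j r m1)" and "m1 < m2"
  shows "\<not> is_decide (early_action P n t v j r m2)"
proof -
  have "ready P n t v j r m1 \<or> is_decide (P j (lst n r j m1))"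
    using assms(1) unfolding early_action_def is_decide_def by (auto split: if_splits)
  with assms(2) show ?thesis
    unfolding early_action_def is_decide_def by auto
qed

lemma early_action_decides_first:
  assumes "ready P n t v j r m \<or> is_decide (P j (lst n r j m))"
  shows "\<exists>k\<le>m. is_decide (early_action P n t v j r k)"
proof -
  let ?event = "\<lambda>k. ready P n t v j r k \<or> is_decide (P j (lst n r j k))"
  let ?k = "LEAST k. ?event k"
  have event: "?event ?k" and "?k \<le> m"
    using LeastI[of ?event m] Least_le[of ?event m] assms by simp_all
  have "\<not> (\<exists>k<?k. ?event k)"
    using not_less_Least[of _ ?event] by blast
  then have "early_action P n t v j r ?k =
      (if ready P n t v j r ?k then Decide v else P j (lst n r j ?k))"
    unfolding early_action_def by (simp only: if_False)
  with event have "is_decide (early_action P n t v j r ?k)"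
    by (auto simp: is_decide_def)
  with \<open>?k \<le> m\<close> show ?thesis
    by blast
qed

text \<open>Once the common knowledge holds, every nonfaulty agent that has not yet decided \<not>v
  knows it and decides v, so no nonfaulty agent ever decides \<not>v.\<close>
lemma early_action_never_opposite:
  assumes "t < n" and r: "r \<in> runs n t" and safe: "safe_to_decide P n t v (r, k0)"
    and j: "j \<in> rN r"
  shows "early_action P n t v j r m \<noteq> Decide (\<not> v)"
proof
  assume dec: "early_action P n t v j r m = Decide (\<not> v)"
  then have quiet: "\<forall>k<m. \<not> ready P n t v j r k \<and> \<not> is_decide (P j (lst n r j k))"
    and not_ready: "\<not> ready P n t v j r m" and P_dec: "P j (lst n r j m) = Decide (\<not> v)"
    using early_action_decide_cases[OF dec] by auto
  have "no_decided P n (\<not> v) (r, k0)"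
    by (rule safe_to_decide_veridical(1)[OF \<open>t < n\<close> r safe])
  moreover have "decides_in_round P n r j (Suc m) (\<not> v)"
    using P_dec by (simp add: decides_in_round_def)
  ultimately have "\<not> Suc m \<le> k0"
    using j unfolding no_decided_def decided_val_def by auto
  then have "k0 \<le> m"
    by simp
  have "\<not> is_decide (P j (lst n r j (l - 1)))" if "1 \<le> l" and "l \<le> k0" for l
    using quiet that \<open>k0 \<le> m\<close> by simp
  then have "undecided P n j (r, k0)"
    unfolding undecided_def decides_in_round_def is_decide_def by auto
  moreover have "K (runs n t) n j (safe_to_decide P n t v) (r, k0)"
    by (rule safe_to_decide_known[OF safe j])
  ultimately have "ready P n t v j r k0"
    by (simp add: ready_def)
  with quiet not_ready \<open>k0 \<le> m\<close> show False
    by (cases "k0 = m") auto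
qed

section \<open>The early protocol is an improvement\<close>

lemma decides_in_round_early:
  "r \<in> runs n t \<Longrightarrow> decides_in_round (early_protocol P n t v) n r j k w \<longleftrightarrow>
     1 \<le> k \<and> early_action P n t v j r (k - 1) = Decide w"
  by (simp add: decides_in_round_def early_protocol_lst)

lemma early_decision_is_v_or_P:
  assumes r: "r \<in> runs n t" and dec: "early_action P n t v j r m = Decide w"
  shows "w = v \<and> safe_to_decide P n t v (r, m) \<or> P j (lst n r j m) = Decide w"
  using early_action_decide_cases(2)[OF dec] K_veridical[OF r, of n j "safe_to_decide P n t v" m]
  unfolding ready_def by blast

lemma EBA_agreement:
  "EBA n t P \<Longrightarrow> r \<in> runs n t \<Longrightarrow> i \<in> rN r \<Longrightarrow> j \<in> rN r \<Longrightarrow>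
    decides_in_round P n r i k u \<Longrightarrow> decides_in_round P n r j k' w \<Longrightarrow> u = w"
  unfolding EBA_def by blast

lemma EBA_validity:
  "EBA n t P \<Longrightarrow> r \<in> runs n t \<Longrightarrow> i \<in> rN r \<Longrightarrow> decides_in_round P n r i k w \<Longrightarrow>
    \<exists>j\<in>agts n. rinit r j = w"
  unfolding EBA_def by blast

lemma EBA_termination:
  "EBA n t P \<Longrightarrow> r \<in> runs n t \<Longrightarrow> i \<in> rN r \<Longrightarrow> \<exists>k w. decides_in_round P n r i k w"
  unfolding EBA_def by blast

lemma early_protocol_unique_decision:
  assumes r: "r \<in> runs n t" and "k < k'"
    and "decides_in_round (early_protocol P n t v) n r j k u"
  shows "\<not> decides_in_round (early_protocol P n t v) n r j k' w"
proof -
  have "k - 1 < k' - 1" and "is_decide (early_action P n t v j r (k - 1))"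
    using assms(2,3) unfolding decides_in_round_early[OF r] is_decide_def by auto
  then show ?thesis
    using early_action_decides_once unfolding decides_in_round_early[OF r] is_decide_def by blast
qed

lemma early_protocol_agreement:
  assumes "t < n" and eba: "EBA n t P" and r: "r \<in> runs n t" and "j1 \<in> rN r" "j2 \<in> rN r"
    and dec1: "decides_in_round (early_protocol P n t v) n r j1 k1 u"
    and dec2: "decides_in_round (early_protocol P n t v) n r j2 k2 w"
  shows "u = w"
proof (cases "\<exists>k0. safe_to_decide P n t v (r, k0)")
  case True
  then obtain k0 where safe: "safe_to_decide P n t v (r, k0)"
    by blast
  have "early_action P n t v j1 r (k1 - 1) \<noteq> Decide (\<not> v)"
    and "early_action P n t v j2 r (k2 - 1) \<noteq> Decide (\<not> v)"
    using early_action_never_opposite[OF assms(1) r safe] assms(4,5) by blast+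
  then show ?thesis
    using dec1 dec2 unfolding decides_in_round_early[OF r] by auto
next
  case False
  have "decides_in_round P n r j k u"
    if "decides_in_round (early_protocol P n t v) n r j k u" for j k u
  proof -
    have "1 \<le> k" and "early_action P n t v j r (k - 1) = Decide u"
      using that unfolding decides_in_round_early[OF r] by auto
    with False early_decision_is_v_or_P[OF r] show ?thesis
      unfolding decides_in_round_def by blast
  qed
  with dec1 dec2 have "decides_in_round P n r j1 k1 u" and "decides_in_round P n r j2 k2 w"
    by blast+
  then show ?thesis
    using EBA_agreement[OF eba r assms(4,5)] by blast
qed

lemma early_protocol_validity:
  assumes "t < n" and eba: "EBA n t P" and r: "r \<in> runs n t" and j: "j \<in> rN r"
    and "decides_in_round (early_protocol P n t v) n r j k w"
  shows "\<exists>i\<in>agts n. rinit r i = w"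
proof -
  have "1 \<le> k" and early: "early_action P n t v j r (k - 1) = Decide w"
    using assms(5) unfolding decides_in_round_early[OF r] by auto
  from early_decision_is_v_or_P[OF r early] show ?thesis
  proof
    assume "w = v \<and> safe_to_decide P n t v (r, k - 1)"
    with safe_to_decide_veridical(2)[OF \<open>t < n\<close> r] show ?thesis
      unfolding exists_init_def by auto
  next
    assume "P j (lst n r j (k - 1)) = Decide w"
    with \<open>1 \<le> k\<close> have "decides_in_round P n r j k w"
      by (simp add: decides_in_round_def)
    then show ?thesis
      by (rule EBA_validity[OF eba r j])
  qed
qed

lemma early_protocol_termination:
  assumes eba: "EBA n t P" and r: "r \<in> runs n t" and j: "j \<in> rN r"
  shows "\<exists>k w. decides_in_round (early_protocol P n t v) n r j k w"
proof -
  obtain k u where "decides_in_round P n r j k u"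
    using EBA_termination[OF eba r j] by blast
  then have "is_decide (P j (lst n r j (k - 1)))"
    by (auto simp: decides_in_round_def is_decide_def)
  then obtain k' w where "early_action P n t v j r k' = Decide w"
    using early_action_decides_first unfolding is_decide_def by blast
  then show ?thesis
    unfolding decides_in_round_early[OF r] by (intro exI[of _ "Suc k'"]) simp
qed

lemma early_protocol_EBA:
  assumes "t < n" and "EBA n t P"
  shows "EBA n t (early_protocol P n t v)"
  unfolding EBA_def
proof (intro ballI conjI allI impI)
  fix r assume r: "r \<in> runs n t"
  show "\<not> decides_in_round (early_protocol P n t v) n r j k' (\<not> u)"
    if "k < k' \<and> decides_in_round (early_protocol P n t v) n r j k u" for j k k' u
    using early_protocol_unique_decision[OF r] that by blast
  show "u = w" if "j1 \<in> rN r" "j2 \<in> rN r"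
    "decides_in_round (early_protocol P n t v) n r j1 k1 u \<and>
     decides_in_round (early_protocol P n t v) n r j2 k2 w" for j1 j2 k1 k2 u w
    using early_protocol_agreement[OF assms r that(1,2)] that(3) by blast
  show "\<exists>i\<in>agts n. rinit r i = w"
    if "j \<in> rN r" "decides_in_round (early_protocol P n t v) n r j k w" for j k w
    using early_protocol_validity[OF assms r that] .
  show "\<exists>k w. decides_in_round (early_protocol P n t v) n r j k w" if "j \<in> rN r" for j
    using early_protocol_termination[OF assms(2) r that] .
qed

lemma early_protocol_dominates: "dominates n t (early_protocol P n t v) P"
  unfolding dominates_def
  by (auto simp: early_protocol_lst dest: early_action_decide_cases(1))

lemma optimal_decides_when_safe_known:
  assumes "t < n" and opt: "optimal n t P" and r: "r \<in> runs n t"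
    and known: "K (runs n t) n i (safe_to_decide P n t v) (r, m)"
    and j: "j \<in> rN r" and undecided: "undecided P n j (r, m)"
  shows "is_decide (P j (lst n r j m))"
proof (rule ccontr)
  assume silent: "\<not> is_decide (P j (lst n r j m))"
  have eba: "EBA n t P"
    using opt by (simp add: optimal_def)
  have "ready P n t v j r m"
    using undecided safe_to_decide_known[OF K_veridical[OF r known] j] by (simp add: ready_def)
  then obtain k where "k \<le> m" and early: "is_decide (early_protocol P n t v j (lst n r j k))"
    using early_action_decides_first[of P n t v j r m] by (auto simp: early_protocol_lst[OF r])
  obtain k1 u where "decides_in_round P n r j k1 u"
    using EBA_termination[OF eba r j] by blast
  then have late: "P j (lst n r j (k1 - 1)) = Decide u"
    by (simp add: decides_in_round_def)
  have "\<not> k1 \<le> m"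
    using undecided \<open>decides_in_round P n r j k1 u\<close> unfolding undecided_def by auto
  moreover have "k1 - 1 \<noteq> m"
    using silent late by (auto simp: is_decide_def)
  ultimately have "k < k1 - 1"
    using \<open>k \<le> m\<close> by linarith
  have "\<not> dominates n t P (early_protocol P n t v)"
  proof
    assume "dominates n t P (early_protocol P n t v)"
    then have "\<forall>k'<k1 - 1. \<not> is_decide (early_protocol P n t v j (lst n r j k'))"
      using r j late unfolding dominates_def by blast
    with \<open>k < k1 - 1\<close> early show False
      by blast
  qed
  then show False
    using opt early_protocol_EBA[OF \<open>t < n\<close> eba] early_protocol_dominates
    unfolding optimal_def by blast
qed

theorem mainTheorem7:
  fixes n t :: nat and P :: protocol and r :: run and i m :: nat
  assumes "t < n" and "optimal n t P" and "r \<in> runs n t" and "i \<in> agts n"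
  shows "((undecided P n i (r, m) \<and>
            K (runs n t) n i (C_tfaulty (runs n t) n t
               (\<lambda>pt. no_decided P n True pt \<and> exists_init n False pt)) (r, m))
          \<or> (undecided P n i (r, m) \<and>
            K (runs n t) n i (C_tfaulty (runs n t) n t
               (\<lambda>pt. no_decided P n False pt \<and> exists_init n True pt)) (r, m)))
         \<longrightarrow> (\<forall>j\<in>rN r. undecided P n j (r, m) \<longrightarrow> is_decide (P j (lst n r j m)))"
proof (intro impI ballI)
  fix j
  assume hyp: "(undecided P n i (r, m) \<and>
            K (runs n t) n i (C_tfaulty (runs n t) n t
               (\<lambda>pt. no_decided P n True pt \<and> exists_init n False pt)) (r, m))
          \<or> (undecided P n i (r, m) \<and>
            K (runs n t) n i (C_tfaulty (runs n t) n t
               (\<lambda>pt. no_decided P n False pt \<and> exists_init n True pt)) (r, m))"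
    and j: "j \<in> rN r" and undecided: "undecided P n j (r, m)"
  have "safe_to_decide P n t False =
      C_tfaulty (runs n t) n t (\<lambda>pt. no_decided P n True pt \<and> exists_init n False pt)"
    and "safe_to_decide P n t True =
      C_tfaulty (runs n t) n t (\<lambda>pt. no_decided P n False pt \<and> exists_init n True pt)"
    by (simp_all add: safe_to_decide_def)
  with hyp have "K (runs n t) n i (safe_to_decide P n t False) (r, m) \<or>
      K (runs n t) n i (safe_to_decide P n t True) (r, m)"
    by auto
  then show "is_decide (P j (lst n r j m))"
    using optimal_decides_when_safe_known[OF assms(1-3) _ j undecided] by blast
qed

end
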